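(* Let $a\in\mathbb{R}\setminus\{0\}$, $B>0$, and set $\kappa=\min\{1/8,\ B/18,\ B/(8|a|),\ |a|/8,\ |a|B/4,\ \sqrt{|a|}/2\}$. Let $D(\varepsilon,s)=-\varepsilon s^2+is+\varepsilon a$. Then there exists $\varepsilon_1>0$ such that $$|D(\varepsilon,s)|\ge \kappa\,\max\{\min\{1,s^2\},|\varepsilon|^2\}$$ for all $s\in\mathbb{R}$ and all $\varepsilon\in\mathbb{C}$ with $|\mathrm{Re}\,\varepsilon|\ge B(\mathrm{Im}\,\varepsilon)^2$ and $0<|\varepsilon|<2\varepsilon_1$. *)

theory Defs
  imports Complex_Main
begin

definition D :: "real \<Rightarrow> complex \<Rightarrow> real \<Rightarrow> complex" where
  "D a \<epsilon> s = - \<epsilon> * (complex_of_real s)^2 + \<i> * complex_of_real s + \<epsilon> * complex_of_real a"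

definition kappa :: "real \<Rightarrow> real \<Rightarrow> real" where
  "kappa a B = Min {1/8, B/18, B/(8*\<bar>a\<bar>), \<bar>a\<bar>/8, \<bar>a\<bar>*B/4, sqrt \<bar>a\<bar>/2}"

end

theory Submission
  imports Defs
begin

(*
  Writing eps = x + i y and t = a - s^2 we have Re D = x t and Im D = y t + s,
  so |D| >= max |x t| |y t + s|.  Everything reduces to three estimates for
  this real quantity, valid under the parabolic constraint |x| >= B y^2:
    (1) |s| <= 1:  k s^2 <= max |x t| |y t + s|,
    (2) |s| > 1:   k     <= max |x t| |y t + s|,
    (3) s^2 < x^2 + y^2 <= |a|/2 and |x| <= 1:  k (x^2 + y^2) <= |x t|.
  (1) and (2) together give k min(1, s^2) <= ..., and (3) covers the case
  where |eps|^2 dominates min(1, s^2).  The theorem follows with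
  eps1 = min(1, |a|/2) / 2, after checking that kappa satisfies the
  numerical side conditions of the three estimates.
*)

text \<open>Estimate (1): for bounded \<open>s\<close> either the imaginary part \<open>y t + s\<close> stays
  comparable to \<open>s\<close>, or \<open>|y t|\<close> is large, which forces \<open>|x t|\<close> to be large.\<close>

lemma bound_small_s:
  fixes x y s a B k :: real
  assumes s: "\<bar>s\<bar> \<le> 1" and parab: "B * y^2 \<le> \<bar>x\<bar>"
    and k: "0 \<le> k" "k \<le> 1/8" "4 * k * (1 + \<bar>a\<bar>) \<le> B"
  shows "k * s^2 \<le> max \<bar>x * (a - s^2)\<bar> \<bar>y * (a - s^2) + s\<bar>"
proof -
  define t where "t = a - s^2"
  have ss: "s^2 \<le> \<bar>s\<bar>" using s
    by (metis abs_ge_zero abs_mult_self_eq mult_left_le power2_eq_square)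
  show ?thesis
  proof (cases "\<bar>y * t\<bar> \<le> \<bar>s\<bar> / 2")
    case True
    have "k * s^2 \<le> (1/8) * s^2" using k by (intro mult_right_mono) auto
    with True ss show ?thesis unfolding t_def by linarith
  next
    case False
    then have "\<bar>s\<bar>^2 < (2 * \<bar>y * t\<bar>)^2" by (intro power_strict_mono) auto
    then have s2: "s^2 < 4 * y^2 * t^2" by (simp add: power_mult_distrib)
    have "\<bar>t\<bar> \<le> 1 + \<bar>a\<bar>" unfolding t_def using ss s zero_le_power2[of s] by linarith
    then have kt: "4 * k * \<bar>t\<bar> \<le> B"
      using k by (meson order_trans mult_left_mono zero_le_numeral mult_nonneg_nonneg)
    have "k * s^2 \<le> k * (4 * y^2 * t^2)" using s2 k by (intro mult_left_mono) auto
    also have "\<dots> = (4 * k * \<bar>t\<bar>) * (y^2 * \<bar>t\<bar>)"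
      by (simp add: power2_eq_square abs_mult_self_eq algebra_simps)
    also have "\<dots> \<le> B * (y^2 * \<bar>t\<bar>)" using kt by (intro mult_right_mono) auto
    also have "\<dots> = (B * y^2) * \<bar>t\<bar>" by simp
    also have "\<dots> \<le> \<bar>x * t\<bar>" using parab by (simp add: abs_mult mult_right_mono)
    finally show ?thesis unfolding t_def by linarith
  qed
qed

text \<open>Estimate (2): for \<open>|s| > 1\<close>, if \<open>|y t + s| < k\<close> then \<open>|y t| \<ge> 7|s|/8\<close>, and the
  parabolic constraint turns this into \<open>|x t| \<ge> k\<close>.\<close>

lemma bound_large_s:
  fixes x y s a B k :: real
  assumes s: "1 < \<bar>s\<bar>" and parab: "B * y^2 \<le> \<bar>x\<bar>" and B: "0 < B"
    and k: "0 \<le> k" "k \<le> 1/8" "4 * k * (1 + \<bar>a\<bar>) \<le> B"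
  shows "k \<le> max \<bar>x * (a - s^2)\<bar> \<bar>y * (a - s^2) + s\<bar>"
proof -
  define t where "t = a - s^2"
  show ?thesis
  proof (cases "k \<le> \<bar>y * t + s\<bar>")
    case True
    then show ?thesis unfolding t_def by linarith
  next
    case False
    then have yt: "7/8 * \<bar>s\<bar> \<le> \<bar>y * t\<bar>" using s k by linarith
    then have "(7/8 * \<bar>s\<bar>)^2 \<le> \<bar>y * t\<bar>^2" by (intro power_mono) auto
    moreover have "(7/8 * \<bar>s\<bar>)^2 = 49/64 * s^2" by (simp add: power2_eq_square abs_mult_self_eq)
    ultimately have y2t2: "49/64 * s^2 \<le> y^2 * t^2" by (simp add: power_mult_distrib)
    have t0: "0 < \<bar>t\<bar>" using yt s by auto
    have s21: "1 \<le> s^2" using s abs_square_less_1[of s] by linarith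
    have "\<bar>t\<bar> \<le> \<bar>a\<bar> + s^2" unfolding t_def using abs_triangle_ineq4[of a "s^2"] by simp
    also have "\<dots> \<le> s^2 * (1 + \<bar>a\<bar>)"
      using mult_left_mono[OF s21, of "\<bar>a\<bar>"] by (simp add: algebra_simps)
    finally have tb: "\<bar>t\<bar> \<le> s^2 * (1 + \<bar>a\<bar>)" .
    have "k * \<bar>t\<bar> \<le> s^2 * (k * (1 + \<bar>a\<bar>))"
      using mult_left_mono[OF tb k(1)] by (simp add: algebra_simps)
    also have "\<dots> \<le> s^2 * (49/64 * B)" using k B by (intro mult_left_mono) auto
    also have "\<dots> = B * (49/64 * s^2)" by simp
    also have "\<dots> \<le> B * (y^2 * t^2)" using y2t2 B by (intro mult_left_mono) auto
    also have "\<dots> = (B * y^2) * \<bar>t\<bar> * \<bar>t\<bar>"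
      by (simp add: power2_eq_square abs_mult_self_eq algebra_simps)
    also have "\<dots> \<le> (\<bar>x\<bar> * \<bar>t\<bar>) * \<bar>t\<bar>" using parab by (intro mult_right_mono) auto
    finally have "k \<le> \<bar>x\<bar> * \<bar>t\<bar>" using t0 by (rule mult_right_le_imp_le)
    then show ?thesis unfolding t_def by (simp add: abs_mult)
  qed
qed

lemma bound_min_s:
  fixes x y s a B k :: real
  assumes parab: "B * y^2 \<le> \<bar>x\<bar>" and B: "0 < B"
    and k: "0 \<le> k" "k \<le> 1/8" "4 * k * (1 + \<bar>a\<bar>) \<le> B"
  shows "k * min 1 (s^2) \<le> max \<bar>x * (a - s^2)\<bar> \<bar>y * (a - s^2) + s\<bar>"
proof (cases "\<bar>s\<bar> \<le> 1")
  case True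
  then have "min 1 (s^2) = s^2" by (simp add: abs_square_le_1)
  then show ?thesis using bound_small_s[OF True parab k] by simp
next
  case False
  then have "1 \<le> s^2" using abs_square_less_1[of s] by linarith
  then have "min 1 (s^2) = 1" by simp
  then show ?thesis using bound_large_s[of s, OF _ parab B k] False by simp
qed

text \<open>Estimate (3): when \<open>s\<^sup>2 < x\<^sup>2 + y\<^sup>2 \<le> |a|/2\<close>, the factor \<open>t = a - s\<^sup>2\<close> has size at
  least \<open>|a|/2\<close>, and both \<open>x\<^sup>2\<close> and \<open>y\<^sup>2\<close> are controlled by \<open>|x|\<close>.\<close>

lemma bound_large_eps:
  fixes x y s a B k :: real
  assumes s: "s^2 < x^2 + y^2" and eps: "x^2 + y^2 \<le> \<bar>a\<bar> / 2" "\<bar>x\<bar> \<le> 1"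
    and parab: "B * y^2 \<le> \<bar>x\<bar>" and B: "0 < B"
    and k: "0 \<le> k" "k \<le> \<bar>a\<bar> / 8" "k \<le> \<bar>a\<bar> * B / 4"
  shows "k * (x^2 + y^2) \<le> \<bar>x * (a - s^2)\<bar>"
proof -
  have ta: "\<bar>a\<bar> / 2 \<le> \<bar>a - s^2\<bar>" using s eps zero_le_power2[of s] by linarith
  have y2: "y^2 \<le> \<bar>x\<bar> / B" using parab B by (simp add: field_simps)
  have x2: "x^2 \<le> \<bar>x\<bar>" using eps(2)
    by (metis abs_ge_zero abs_mult_self_eq mult_left_le power2_eq_square)
  have kB: "k / B \<le> \<bar>a\<bar> / 4" using B k by (simp add: field_simps)
  have "k * (x^2 + y^2) \<le> k * \<bar>x\<bar> + (k / B) * \<bar>x\<bar>"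
    using mult_left_mono[OF add_mono[OF x2 y2] k(1)] by (simp add: algebra_simps)
  also have "\<dots> \<le> \<bar>a\<bar> / 8 * \<bar>x\<bar> + \<bar>a\<bar> / 4 * \<bar>x\<bar>"
    using k kB by (intro add_mono mult_right_mono) auto
  also have "\<dots> = \<bar>x\<bar> * (3/8 * \<bar>a\<bar>)" by (simp add: algebra_simps)
  also have "\<dots> \<le> \<bar>x\<bar> * \<bar>a - s^2\<bar>" using ta by (intro mult_left_mono) auto
  finally show ?thesis by (simp add: abs_mult)
qed

lemma bound_real:
  fixes x y s a B k :: real
  assumes eps: "x^2 + y^2 < 1" "x^2 + y^2 \<le> \<bar>a\<bar> / 2" "\<bar>x\<bar> \<le> 1"
    and parab: "B * y^2 \<le> \<bar>x\<bar>" and B: "0 < B"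
    and k: "0 \<le> k" "k \<le> 1/8" "4 * k * (1 + \<bar>a\<bar>) \<le> B"
      "k \<le> \<bar>a\<bar> / 8" "k \<le> \<bar>a\<bar> * B / 4"
  shows "k * max (min 1 (s^2)) (x^2 + y^2) \<le> max \<bar>x * (a - s^2)\<bar> \<bar>y * (a - s^2) + s\<bar>"
proof (cases "x^2 + y^2 \<le> min 1 (s^2)")
  case True
  then show ?thesis using bound_min_s[OF parab B k(1-3)] by (simp add: max_absorb1)
next
  case False
  then have s: "s^2 < x^2 + y^2" using eps(1) by linarith
  then have "max (min 1 (s^2)) (x^2 + y^2) = x^2 + y^2" by simp
  with bound_large_eps[OF s eps(2,3) parab B k(1,4,5)] show ?thesis by simp
qed

lemma D_eq: "D a \<epsilon> s = \<epsilon> * complex_of_real (a - s^2) + \<i> * complex_of_real s"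
  unfolding D_def by (simp add: algebra_simps)

lemma cmod_D_ge:
  "max \<bar>Re \<epsilon> * (a - s^2)\<bar> \<bar>Im \<epsilon> * (a - s^2) + s\<bar> \<le> cmod (D a \<epsilon> s)"
  using abs_Re_le_cmod[of "D a \<epsilon> s"] abs_Im_le_cmod[of "D a \<epsilon> s"]
  by (simp add: D_eq)

text \<open>The numerical side conditions satisfied by \<open>\<kappa>\<close> (the entry \<open>sqrt |a| / 2\<close> of the
  minimum is not needed for this argument).\<close>

lemma kappa_bounds:
  assumes "a \<noteq> 0" "0 < B"
  shows "0 \<le> kappa a B" "kappa a B \<le> 1/8" "4 * kappa a B * (1 + \<bar>a\<bar>) \<le> B"
    "kappa a B \<le> \<bar>a\<bar> / 8" "kappa a B \<le> \<bar>a\<bar> * B / 4"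
proof -
  have fin: "finite {1/8, B/18, B/(8*\<bar>a\<bar>), \<bar>a\<bar>/8, \<bar>a\<bar>*B/4, sqrt \<bar>a\<bar>/2}" by simp
  have le: "kappa a B \<le> c" if "c \<in> {1/8, B/18, B/(8*\<bar>a\<bar>), \<bar>a\<bar>/8, \<bar>a\<bar>*B/4, sqrt \<bar>a\<bar>/2}" for c
    unfolding kappa_def using Min_le[OF fin that] .
  show "0 \<le> kappa a B" using assms unfolding kappa_def by (subst Min_ge_iff) auto
  show "kappa a B \<le> 1/8" "kappa a B \<le> \<bar>a\<bar> / 8" "kappa a B \<le> \<bar>a\<bar> * B / 4"
    by (rule le; simp)+
  have "kappa a B * \<bar>a\<bar> \<le> B / 8" using le[of "B/(8*\<bar>a\<bar>)"] assms by (simp add: field_simps)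
  moreover have "kappa a B \<le> B / 18" by (rule le) simp
  ultimately show "4 * kappa a B * (1 + \<bar>a\<bar>) \<le> B" using assms by (simp add: algebra_simps)
qed

theorem lemma3p1:
  fixes a B :: real
  assumes "a \<noteq> 0" and "B > 0"
  shows "\<exists>\<epsilon>1>0. \<forall>s::real. \<forall>\<epsilon>::complex.
           \<bar>Re \<epsilon>\<bar> \<ge> B * (Im \<epsilon>)^2 \<and> 0 < cmod \<epsilon> \<and> cmod \<epsilon> < 2 * \<epsilon>1 \<longrightarrow>
           cmod (D a \<epsilon> s) \<ge> kappa a B * max (min 1 (s^2)) ((cmod \<epsilon>)^2)"
proof (intro exI[of _ "min 1 (\<bar>a\<bar> / 2) / 2"] conjI allI impI)
  show "0 < min 1 (\<bar>a\<bar> / 2) / 2" using assms(1) by simp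
  fix s :: real and \<epsilon> :: complex
  assume h: "B * (Im \<epsilon>)^2 \<le> \<bar>Re \<epsilon>\<bar> \<and> 0 < cmod \<epsilon> \<and> cmod \<epsilon> < 2 * (min 1 (\<bar>a\<bar> / 2) / 2)"
  define x y where "x = Re \<epsilon>" and "y = Im \<epsilon>"
  have parab: "B * y^2 \<le> \<bar>x\<bar>" using h by (simp add: x_def y_def)
  have e2: "(cmod \<epsilon>)^2 = x^2 + y^2" by (simp add: x_def y_def cmod_power2)
  have "cmod \<epsilon> < 1" "cmod \<epsilon> < \<bar>a\<bar> / 2" using h by auto
  then have "(cmod \<epsilon>)^2 \<le> cmod \<epsilon>" by (simp add: power2_eq_square mult_left_le)
  with \<open>cmod \<epsilon> < 1\<close> \<open>cmod \<epsilon> < \<bar>a\<bar> / 2\<close> have small: "x^2 + y^2 < 1" "x^2 + y^2 \<le> \<bar>a\<bar> / 2"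
    using e2 by linarith+
  have x1: "\<bar>x\<bar> \<le> 1" using abs_Re_le_cmod[of \<epsilon>] \<open>cmod \<epsilon> < 1\<close> by (simp add: x_def)
  from bound_real[OF small x1 parab assms(2) kappa_bounds[OF assms]]
  have "kappa a B * max (min 1 (s^2)) (x^2 + y^2) \<le> max \<bar>x * (a - s^2)\<bar> \<bar>y * (a - s^2) + s\<bar>" .
  with cmod_D_ge[of \<epsilon> a s]
  show "kappa a B * max (min 1 (s^2)) ((cmod \<epsilon>)^2) \<le> cmod (D a \<epsilon> s)"
    unfolding e2 x_def y_def by (rule order_trans[rotated])
qed

end
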